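(* Let $A,r,a,\mu>0$ and $0<\beta_0<1$, and consider the system $$\dot S = S(A-S)-\beta_0 IS,\qquad \dot I=\beta_0 IS-\mu I-\frac{rI}{a+I}.$$ Let $\Delta=\big(a\beta_0+A-\frac{\mu}{\beta_0}\big)^2-4r$, assume $\Delta>0$, and let $$S_3=\tfrac12\Big(a\beta_0+A+\tfrac{\mu}{\beta_0}-\sqrt\Delta\Big),\quad S_4=\tfrac12\Big(a\beta_0+A+\tfrac{\mu}{\beta_0}+\sqrt\Delta\Big),\quad E_j=\Big(S_j,\frac{A-S_j}{\beta_0}\Big)\ (j=3,4),$$ and assume $S_3<S_4<A$. Then the endemic equilibrium $E_3$ is a sink and the endemic equilibrium $E_4$ is a saddle.
   Context: $\mu$ denotes the total death rate of infectious individuals. $E_3,E_4$ are the endemic equilibria (zeros of the vector field with $I\neq 0$). A sink is an equilibrium whose Jacobian eigenvalues all have negative real part; a saddle is an equilibrium whose Jacobian has two real eigenvalues of opposite signs. *)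

theory Defs
  imports "HOL-Analysis.Analysis"
begin

definition si_field :: "real \<Rightarrow> real \<Rightarrow> real \<Rightarrow> real \<Rightarrow> real \<Rightarrow> real^2 \<Rightarrow> real^2" where
  "si_field A r a \<mu> \<beta>\<^sub>0 x =
     (let S = x$1; I = x$2 in
      vector [S * (A - S) - \<beta>\<^sub>0 * I * S, \<beta>\<^sub>0 * I * S - \<mu> * I - r * I / (a + I)])"

definition state :: "real \<Rightarrow> real \<Rightarrow> real^2" where
  "state S I = vector [S, I]"

definition cmat :: "real^'n^'n \<Rightarrow> complex^'n^'n" where
  "cmat M = (\<chi> i j. complex_of_real (M$i$j))"

definition is_eigenvalue :: "real^'n^'n \<Rightarrow> complex \<Rightarrow> bool" where
  "is_eigenvalue M z \<longleftrightarrow> det (mat z - cmat M) = 0"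

definition is_sink :: "(real^2 \<Rightarrow> real^2) \<Rightarrow> real^2 \<Rightarrow> bool" where
  "is_sink F E \<longleftrightarrow> F E = 0 \<and> (\<forall>z. is_eigenvalue (jacobian F (at E)) z \<longrightarrow> Re z < 0)"

definition is_saddle :: "(real^2 \<Rightarrow> real^2) \<Rightarrow> real^2 \<Rightarrow> bool" where
  "is_saddle F E \<longleftrightarrow> F E = 0 \<and> (\<exists>l1 l2::real. l1 < 0 \<and> 0 < l2 \<and>
      is_eigenvalue (jacobian F (at E)) (complex_of_real l1) \<and>
      is_eigenvalue (jacobian F (at E)) (complex_of_real l2))"

end

theory Submission
  imports Defs "HOL-Library.Quadratic_Discriminant"
begin

(* At an endemic equilibrium the equilibrium conditions turn the Jacobian into
   [[-S, -beta S], [beta I, r I/(a+I)^2]], whose trace is negative as beta < 1.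
   Its determinant has the sign of c - S, where c = (a beta + A + mu/beta)/2 is the
   midpoint of the two roots S3, S4 of the quadratic equilibrium equation. Hence
   det J > 0 at E3, so both eigenvalues lie in the left half plane, and det J < 0 at E4,
   so the eigenvalues are real of opposite signs. *)

definition si_jacobian :: "real \<Rightarrow> real \<Rightarrow> real \<Rightarrow> real \<Rightarrow> real \<Rightarrow> real^2 \<Rightarrow> real^2^2" where
  "si_jacobian A r a \<mu> \<beta> x =
     (let S = x$1; I = x$2 in
      vector [vector [A - 2 * S - \<beta> * I, - \<beta> * S],
              vector [\<beta> * I, \<beta> * S - \<mu> - r * a / (a + I)^2]])"

lemma has_derivative_si_field:
  fixes x :: "real^2"
  assumes "a + x$2 \<noteq> 0"
  shows "(si_field A r a \<mu> \<beta> has_derivative (\<lambda>h. si_jacobian A r a \<mu> \<beta> x *v h)) (at x)"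
proof -
  have nth: "((\<lambda>x::real^2. x$i) has_derivative (\<lambda>h. h$i)) F" for i F
    by (simp add: bounded_linear_imp_has_derivative bounded_linear_vec_nth)
  have field: "si_field A r a \<mu> \<beta> = (\<lambda>x. (x$1 * (A - x$1) - \<beta> * x$2 * x$1) *\<^sub>R axis 1 1 +
     (\<beta> * x$2 * x$1 - \<mu> * x$2 - r * x$2 / (a + x$2)) *\<^sub>R axis 2 1)"
    by (rule ext) (simp add: si_field_def Let_def vec_eq_iff forall_2 axis_def)
  show ?thesis
    unfolding field
    apply (rule has_derivative_eq_rhs)
     apply (rule derivative_eq_intros nth refl assms)+
    apply (rule ext)
    using assms
    by (simp add: vec_eq_iff forall_2 axis_def si_jacobian_def Let_def matrix_vector_mult_def sum_2)
       (simp add: divide_simps power2_eq_square; algebra)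
qed

lemma jacobian_si_field:
  fixes x :: "real^2"
  assumes "a + x$2 \<noteq> 0"
  shows "jacobian (si_field A r a \<mu> \<beta>) (at x) = si_jacobian A r a \<mu> \<beta> x"
  by (simp add: jacobian_def frechet_derivative_at[OF has_derivative_si_field[OF assms], symmetric])

lemma is_eigenvalue_2_iff:
  fixes M :: "real^2^2"
  shows "is_eigenvalue M z \<longleftrightarrow> z^2 - of_real (trace M) * z + of_real (det M) = 0"
  by (simp add: is_eigenvalue_def det_2 trace_def sum_2 cmat_def mat_def power2_eq_square algebra_simps)

lemma eigenvalue_Re_neg:
  fixes M :: "real^2^2"
  assumes "trace M < 0" "det M > 0" "is_eigenvalue M z"
  shows "Re z < 0"
proof -
  obtain x y where z: "z = Complex x y" by (cases z)
  have "z^2 - of_real (trace M) * z + of_real (det M) = 0"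
    using assms(3) by (simp add: is_eigenvalue_2_iff)
  from arg_cong[OF this, of Re] arg_cong[OF this, of Im]
  have re: "x^2 - y^2 - trace M * x + det M = 0" and im: "(2*x - trace M) * y = 0"
    by (simp_all add: z power2_eq_square algebra_simps)
  show ?thesis
  proof (cases "y = 0")
    case True
    with re have "x^2 + det M = trace M * x" by simp
    with assms(1,2) show ?thesis
      by (simp add: z) (smt (verit) mult_nonpos_nonneg zero_le_power2)
  next
    case False
    with im have "2*x = trace M" by simp
    with assms(1) show ?thesis by (simp add: z)
  qed
qed

lemma eigenvalues_opposite_signs:
  fixes M :: "real^2^2"
  assumes "det M < 0"
  shows "\<exists>l1 l2. l1 < 0 \<and> 0 < l2 \<and> is_eigenvalue M (of_real l1) \<and> is_eigenvalue M (of_real l2)"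
proof -
  define q where "q = sqrt (discrim 1 (- trace M) (det M))"
  have disc: "discrim 1 (- trace M) (det M) > (trace M)^2"
    using assms by (simp add: discrim_def)
  then have disc_nonneg: "discrim 1 (- trace M) (det M) \<ge> 0"
    using zero_le_power2[of "trace M"] by linarith
  have "\<bar>trace M\<bar> < q"
    using disc unfolding q_def by (intro real_less_rsqrt) simp
  moreover have "is_eigenvalue M (of_real l)" if "l = (trace M - q)/2 \<or> l = (trace M + q)/2" for l
  proof -
    have "l^2 - trace M * l + det M = 0"
      using discriminant_nonneg[of 1 "- trace M" "det M" l] disc_nonneg that
      unfolding q_def by (auto simp: add_ac)
    then have "of_real (l^2 - trace M * l + det M) = (0::complex)" by simp
    then show ?thesis by (simp add: is_eigenvalue_2_iff)
  qed
  ultimately show ?thesis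
    by (intro exI[of _ "(trace M - q)/2"] exI[of _ "(trace M + q)/2"])
      (auto simp del: of_real_divide of_real_diff of_real_add)
qed

(* The I-nullcline beta S - mu = r/(a + I) with I = (A - S)/beta substituted; as an
   equation in S it is the quadratic whose roots are S3 and S4. *)
locale si_endemic_equilibrium =
  fixes A r a \<mu> \<beta> S :: real
  assumes a_pos: "a > 0" and r_pos: "r > 0" and \<mu>_pos: "\<mu> > 0"
    and \<beta>_pos: "\<beta> > 0" and \<beta>_less_1: "\<beta> < 1" and S_less_A: "S < A"
    and equilibrium: "(S - \<mu> / \<beta>) * (a * \<beta> + A - S) = r"
begin

definition I :: real where "I = (A - S) / \<beta>"

lemma \<beta>_I_eq: "\<beta> * I = A - S"
  using \<beta>_pos by (simp add: I_def)

lemma I_pos: "I > 0"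
  using \<beta>_pos S_less_A by (simp add: I_def)

lemma a_I_pos: "a + I > 0"
  using a_pos I_pos by simp

lemma infected_nullcline: "\<beta> * S - \<mu> = r / (a + I)"
proof -
  have "a * \<beta> + A - S = \<beta> * (a + I)"
    using \<beta>_I_eq by (simp add: algebra_simps)
  moreover have "(S - \<mu> / \<beta>) * \<beta> = \<beta> * S - \<mu>"
    using \<beta>_pos by (simp add: field_simps)
  ultimately have "(\<beta> * S - \<mu>) * (a + I) = r"
    using equilibrium by (metis mult.assoc)
  with a_I_pos show ?thesis
    by (simp add: eq_divide_eq)
qed

lemma S_pos: "S > 0"
proof -
  have "r / (a + I) > 0"
    using r_pos a_I_pos by simp
  with infected_nullcline \<mu>_pos have "\<beta> * S > 0" by linarith
  with \<beta>_pos show ?thesis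
    by (simp add: zero_less_mult_iff)
qed

lemma si_field_vanishes: "si_field A r a \<mu> \<beta> (state S I) = 0"
proof -
  have susceptible: "S * (A - S) - \<beta> * I * S = 0"
    using \<beta>_I_eq by (simp add: mult.commute)
  have "\<beta> * I * S - \<mu> * I - r * I / (a + I) = I * (\<beta> * S - \<mu> - r / (a + I))"
    by (simp add: algebra_simps)
  then have infected: "\<beta> * I * S - \<mu> * I - r * I / (a + I) = 0"
    by (simp add: infected_nullcline)
  show ?thesis
    unfolding si_field_def state_def Let_def
    by (simp add: susceptible infected vec_eq_iff forall_2)
qed

lemma jacobian_eq:
  "jacobian (si_field A r a \<mu> \<beta>) (at (state S I)) =
     vector [vector [- S, - \<beta> * S], vector [\<beta> * I, r * I / (a + I)^2]]"
proof -
  have "r / u - r * a / u^2 = r * (u - a) / u^2" if "u > 0" for u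
    using that by (simp add: field_simps power2_eq_square)
  from this[OF a_I_pos]
  have "\<beta> * S - \<mu> - r * a / (a + I)^2 = r * I / (a + I)^2"
    by (simp add: infected_nullcline)
  with \<beta>_I_eq a_I_pos show ?thesis
    by (simp add: jacobian_si_field state_def si_jacobian_def)
qed

lemma trace_jacobian_neg: "trace (jacobian (si_field A r a \<mu> \<beta>) (at (state S I))) < 0"
proof -
  have "r * I / u^2 < r / u" if "u > 0" "I < u" for u
    using that r_pos by (simp add: field_simps power2_eq_square)
  from this[OF a_I_pos] have "r * I / (a + I)^2 < r / (a + I)"
    using a_pos by simp
  also have "\<dots> = \<beta> * S - \<mu>"
    by (rule infected_nullcline[symmetric])
  also have "\<dots> < S"
    using \<beta>_less_1 S_pos \<mu>_pos by (smt (verit) mult_less_cancel_right2)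
  finally show ?thesis
    by (simp add: jacobian_eq trace_def sum_2)
qed

lemma det_jacobian:
  "det (jacobian (si_field A r a \<mu> \<beta>) (at (state S I))) =
     S * I * \<beta>^2 * (a * \<beta> + A + \<mu> / \<beta> - 2 * S) / (a * \<beta> + A - S)"
proof -
  define w where "w = \<beta> * (a + I)"
  have w_pos: "w > 0"
    using \<beta>_pos a_I_pos by (simp add: w_def)
  have "a * \<beta> + A - S = w"
    using \<beta>_I_eq by (simp add: w_def algebra_simps)
  moreover have "a * \<beta> + A + \<mu> / \<beta> - 2 * S = w - r / w"
  proof -
    have "\<mu> = \<beta> * S - r / (a + I)"
      using infected_nullcline by simp
    then have "\<mu> / \<beta> = S - r / w"
      using \<beta>_pos by (simp add: w_def diff_divide_distrib)
    with \<beta>_I_eq show ?thesis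
      by (simp add: w_def algebra_simps)
  qed
  moreover have "r * I / (a + I)^2 = \<beta>^2 * r * I / w^2"
    using \<beta>_pos by (simp add: w_def power_mult_distrib)
  moreover have "S * I * \<beta>^2 * (w - r / w) / w = \<beta>^2 * S * I - S * (\<beta>^2 * r * I / w^2)"
    using w_pos by (simp add: field_simps power2_eq_square)
  ultimately show ?thesis
    by (simp add: jacobian_eq det_2 power2_eq_square)
qed

lemma sgn_det_jacobian:
  "sgn (det (jacobian (si_field A r a \<mu> \<beta>) (at (state S I)))) = sgn (a * \<beta> + A + \<mu> / \<beta> - 2 * S)"
proof -
  have "a * \<beta> > 0"
    using a_pos \<beta>_pos by simp
  then have "a * \<beta> + A - S > 0"
    using S_less_A by linarith
  then show ?thesis
    using S_pos I_pos \<beta>_pos by (simp add: det_jacobian sgn_mult sgn_divide)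
qed

lemma is_sink_if_below_midpoint:
  assumes "2 * S < a * \<beta> + A + \<mu> / \<beta>"
  shows "is_sink (si_field A r a \<mu> \<beta>) (state S I)"
proof -
  have "det (jacobian (si_field A r a \<mu> \<beta>) (at (state S I))) > 0"
    using sgn_det_jacobian assms by (metis diff_gt_0_iff_gt sgn_greater)
  then show ?thesis
    unfolding is_sink_def using si_field_vanishes trace_jacobian_neg eigenvalue_Re_neg by blast
qed

lemma is_saddle_if_above_midpoint:
  assumes "2 * S > a * \<beta> + A + \<mu> / \<beta>"
  shows "is_saddle (si_field A r a \<mu> \<beta>) (state S I)"
proof -
  have "det (jacobian (si_field A r a \<mu> \<beta>) (at (state S I))) < 0"
    using sgn_det_jacobian assms by (metis diff_less_0_iff_less sgn_less)
  then show ?thesis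
    unfolding is_saddle_def using si_field_vanishes eigenvalues_opposite_signs by blast
qed

end

theorem lemma5p4:
  fixes A r a \<mu> \<beta>\<^sub>0 :: real
  assumes "A > 0" "r > 0" "a > 0" "\<mu> > 0" "0 < \<beta>\<^sub>0" "\<beta>\<^sub>0 < 1"
  defines "\<Delta> \<equiv> (a * \<beta>\<^sub>0 + A - \<mu> / \<beta>\<^sub>0)^2 - 4 * r"
  defines "S\<^sub>3 \<equiv> (a * \<beta>\<^sub>0 + A + \<mu> / \<beta>\<^sub>0 - sqrt \<Delta>) / 2"
  defines "S\<^sub>4 \<equiv> (a * \<beta>\<^sub>0 + A + \<mu> / \<beta>\<^sub>0 + sqrt \<Delta>) / 2"
  assumes "\<Delta> > 0" "S\<^sub>3 < S\<^sub>4" "S\<^sub>4 < A"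
  shows "is_sink (si_field A r a \<mu> \<beta>\<^sub>0) (state S\<^sub>3 ((A - S\<^sub>3) / \<beta>\<^sub>0))
       \<and> is_saddle (si_field A r a \<mu> \<beta>\<^sub>0) (state S\<^sub>4 ((A - S\<^sub>4) / \<beta>\<^sub>0))"
proof -
  define p m where "p = a * \<beta>\<^sub>0 + A" and "m = \<mu> / \<beta>\<^sub>0"
  have disc: "\<Delta> = discrim 1 (- (p + m)) (p * m + r)"
    by (simp add: \<Delta>_def p_def m_def discrim_def power2_eq_square algebra_simps)
  have "(S - m) * (p - S) = r" if "S = S\<^sub>3 \<or> S = S\<^sub>4" for S
  proof -
    have "1 * S^2 + - (p + m) * S + (p * m + r) = 0"
      using discriminant_nonneg[of 1 "- (p + m)" "p * m + r" S] that \<open>\<Delta> > 0\<close>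
      by (auto simp: disc S\<^sub>3_def S\<^sub>4_def p_def m_def)
    then show ?thesis
      by (simp add: power2_eq_square algebra_simps)
  qed
  moreover have "S\<^sub>3 < A"
    using \<open>S\<^sub>3 < S\<^sub>4\<close> \<open>S\<^sub>4 < A\<close> by linarith
  ultimately interpret E3: si_endemic_equilibrium A r a \<mu> \<beta>\<^sub>0 S\<^sub>3
    + E4: si_endemic_equilibrium A r a \<mu> \<beta>\<^sub>0 S\<^sub>4
    using assms(1-6) \<open>S\<^sub>4 < A\<close> by unfold_locales (auto simp: p_def m_def)
  have "sqrt \<Delta> > 0"
    using \<open>\<Delta> > 0\<close> by simp
  then have "2 * S\<^sub>3 < a * \<beta>\<^sub>0 + A + \<mu> / \<beta>\<^sub>0" "2 * S\<^sub>4 > a * \<beta>\<^sub>0 + A + \<mu> / \<beta>\<^sub>0"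
    unfolding S\<^sub>3_def S\<^sub>4_def by (simp_all add: field_simps)
  then show ?thesis
    using E3.is_sink_if_below_midpoint E4.is_saddle_if_above_midpoint
    unfolding E3.I_def E4.I_def by blast
qed

end
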